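(* Let an instance with $n$ agents $[n]=\{1,\dots,n\}$, $m$ indivisible items $[m]$ and binary additive valuations be given (notation as in the context). Then every stable allocation is optimal under $\mathsf{LexiMin}$, i.e. it minimizes $\mathsf{LexiMin}(\mathbf{p}(\chi))=\sum_{i=1}^n m^{\,m-h_i}$ over all clean max-USW allocations $\chi$. Consequently, the profiles of any two stable allocations are equal up to a permutation of the coordinates.
   Context: Each agent $i\in[n]$ has a set $L_i\subseteq[m]$ of liked items, and valuation $v_i(S)=|S\cap L_i|$ for $S\subseteq[m]$. An allocation $\chi=(\chi_1,\dots,\chi_n)$ is a tuple of pairwise disjoint subsets of $[m]$ (not necessarily covering $[m]$). It is clean if $\chi_i\subseteq L_i$ for all $i$, and max-USW if it maximizes $\sum_i v_i(\chi_i)$ among all allocations. Throughout, "allocation" means a clean max-USW allocation. The profile of $\chi$ is $\mathbf{p}(\chi)=(h_1,\dots,h_n)$ with $h_i=|\chi_i|$. Given $\chi$, form a directed graph on $[n]$ with an arc $(i,i')$, $i\neq i'$, whenever some item $o\in\chi_i$ satisfies $o\in L_{i'}$. $\chi$ admits a transfer $u\to v$ if there is a simple directed path from $u$ to $v$ with at least one arc in this graph (reallocating the items along the path makes $u$ lose one item and $v$ gain one). A transfer $u\to v$ is narrowing if $h_u\ge h_v+2$. $\chi$ is stable if it admits no narrowing transfer. $\mathsf{LexiMin}(h_1,\dots,h_n)=\sum_i m^{m-h_i}$; an allocation is optimal under a criterion $f$ if it minimizes $f(\mathbf{p}(\chi))$ over all clean max-USW allocations. *)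

theory Defs
  imports Main
begin

text \<open>Agents are 1..n, items are 1..m. L i is the set of items liked by agent i.
An allocation is a function chi from agents to item bundles; only agents in 1..n matter.\<close>

definition is_alloc :: "nat \<Rightarrow> nat \<Rightarrow> (nat \<Rightarrow> nat set) \<Rightarrow> bool" where
  "is_alloc n m chi \<longleftrightarrow>
     (\<forall>i\<in>{1..n}. chi i \<subseteq> {1..m}) \<and>
     (\<forall>i\<in>{1..n}. \<forall>j\<in>{1..n}. i \<noteq> j \<longrightarrow> chi i \<inter> chi j = {})"

definition usw :: "nat \<Rightarrow> (nat \<Rightarrow> nat set) \<Rightarrow> (nat \<Rightarrow> nat set) \<Rightarrow> nat" where
  "usw n L chi = (\<Sum>i\<in>{1..n}. card (chi i \<inter> L i))"

definition is_clean :: "nat \<Rightarrow> (nat \<Rightarrow> nat set) \<Rightarrow> (nat \<Rightarrow> nat set) \<Rightarrow> bool" where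
  "is_clean n L chi \<longleftrightarrow> (\<forall>i\<in>{1..n}. chi i \<subseteq> L i)"

definition is_max_usw :: "nat \<Rightarrow> nat \<Rightarrow> (nat \<Rightarrow> nat set) \<Rightarrow> (nat \<Rightarrow> nat set) \<Rightarrow> bool" where
  "is_max_usw n m L chi \<longleftrightarrow> is_alloc n m chi \<and>
     (\<forall>chi'. is_alloc n m chi' \<longrightarrow> usw n L chi' \<le> usw n L chi)"

text \<open>"Allocation" in the paper: a clean max-USW allocation.\<close>
definition valid_alloc :: "nat \<Rightarrow> nat \<Rightarrow> (nat \<Rightarrow> nat set) \<Rightarrow> (nat \<Rightarrow> nat set) \<Rightarrow> bool" where
  "valid_alloc n m L chi \<longleftrightarrow> is_clean n L chi \<and> is_max_usw n m L chi"

definition arc :: "nat \<Rightarrow> (nat \<Rightarrow> nat set) \<Rightarrow> (nat \<Rightarrow> nat set) \<Rightarrow> nat \<Rightarrow> nat \<Rightarrow> bool" where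
  "arc n L chi i i' \<longleftrightarrow> i \<in> {1..n} \<and> i' \<in> {1..n} \<and> i \<noteq> i' \<and> (\<exists>it\<in>chi i. it \<in> L i')"

definition admits_transfer :: "nat \<Rightarrow> (nat \<Rightarrow> nat set) \<Rightarrow> (nat \<Rightarrow> nat set) \<Rightarrow> nat \<Rightarrow> nat \<Rightarrow> bool" where
  "admits_transfer n L chi u v \<longleftrightarrow>
     (\<exists>ps. length ps \<ge> 2 \<and> distinct ps \<and> hd ps = u \<and> last ps = v \<and>
        (\<forall>k. Suc k < length ps \<longrightarrow> arc n L chi (ps ! k) (ps ! Suc k)))"

definition is_stable :: "nat \<Rightarrow> (nat \<Rightarrow> nat set) \<Rightarrow> (nat \<Rightarrow> nat set) \<Rightarrow> bool" where
  "is_stable n L chi \<longleftrightarrow>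
     \<not> (\<exists>u\<in>{1..n}. \<exists>v\<in>{1..n}. admits_transfer n L chi u v \<and> card (chi u) \<ge> card (chi v) + 2)"

definition LexiMin :: "nat \<Rightarrow> nat \<Rightarrow> (nat \<Rightarrow> nat) \<Rightarrow> nat" where
  "LexiMin n m h = (\<Sum>i\<in>{1..n}. m ^ (m - h i))"

definition profile :: "(nat \<Rightarrow> nat set) \<Rightarrow> nat \<Rightarrow> nat" where
  "profile chi i = card (chi i)"

definition optimal_LexiMin :: "nat \<Rightarrow> nat \<Rightarrow> (nat \<Rightarrow> nat set) \<Rightarrow> (nat \<Rightarrow> nat set) \<Rightarrow> bool" where
  "optimal_LexiMin n m L chi \<longleftrightarrow> valid_alloc n m L chi \<and>
     (\<forall>chi'. valid_alloc n m L chi' \<longrightarrow> LexiMin n m (profile chi) \<le> LexiMin n m (profile chi'))"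

end

theory Submission
  imports Defs "HOL-Library.Transitive_Closure_Table" "HOL-Library.Disjoint_Sets"
begin

text \<open>
  Stability gives a certificate of optimality for every separable convex cost
  \<open>\<Sum>i. p (h i)\<close>, i.e. every \<open>p\<close> with nondecreasing increments.
  All clean max-USW allocations hand out the same items. Let \<open>r i\<close> be the largest
  bundle among the agents that can reach \<open>i\<close> in the transfer graph; stability gives
  \<open>h i \<le> r i \<le> h i + 1\<close>, so the slope \<open>g i\<close> of \<open>p\<close> on the unit segment ending at
  \<open>r i\<close> is a subgradient of \<open>p\<close> at \<open>h i\<close>, and \<open>g\<close> does not decrease along arcs. For another
  allocation \<open>h'\<close>, every item that moves goes from some \<open>j\<close> to an \<open>i\<close> with an arc
  \<open>j \<rightarrow> i\<close>, so \<open>\<Sum>i. g i * h i \<le> \<Sum>i. g i * h' i\<close>; adding the subgradient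
  inequalities yields \<open>\<Sum>i. p (h i) \<le> \<Sum>i. p (h' i)\<close>.
  LexiMin is the cost \<open>p k = m ^ (m - k)\<close>. The threshold costs \<open>p k = max 0 (k + 1 - t)\<close>
  show that two stable allocations have the same number of agents with each bundle size.
\<close>

lemma supporting_line_nat:
  fixes p :: "nat \<Rightarrow> int"
  assumes below: "\<And>j. j < x \<Longrightarrow> p (Suc j) - p j \<le> c"
    and above: "\<And>j. x \<le> j \<Longrightarrow> c \<le> p (Suc j) - p j"
  shows "p x + c * (int y - int x) \<le> p y"
proof -
  define q where "q k = p k - c * int k" for k
  have "q x \<le> q y"
  proof (cases "x \<le> y")
    case True
    have "q (x + d) \<le> q (x + Suc d)" for d
      using above[of "x + d"] by (simp add: q_def algebra_simps)
    then have "q (x + 0) \<le> q (x + (y - x))" by (rule lift_Suc_mono_le) simp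
    with True show ?thesis by simp
  next
    case False
    have "q (x - d) \<le> q (x - Suc d)" for d
    proof (cases "d < x")
      case True
      then have "x - d = Suc (x - Suc d)" by simp
      then show ?thesis using below[of "x - Suc d"] True by (simp add: q_def algebra_simps)
    qed simp
    then have "q (x - 0) \<le> q (x - (x - y))" by (rule lift_Suc_mono_le) simp
    with False show ?thesis by simp
  qed
  then show ?thesis by (simp add: q_def algebra_simps)
qed

lemma convex_supporting_slope:
  fixes p :: "nat \<Rightarrow> int"
  assumes "mono (\<lambda>k. p (Suc k) - p k)" and "x - 1 \<le> k" and "k \<le> x"
  shows "p x + (p (Suc k) - p k) * (int y - int x) \<le> p y"
proof (rule supporting_line_nat)
  fix j
  show "p (Suc j) - p j \<le> p (Suc k) - p k" if "j < x"
    using monoD[OF assms(1), of j k] that assms(2) by simp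
  show "p (Suc k) - p k \<le> p (Suc j) - p j" if "x \<le> j"
    using monoD[OF assms(1), of k j] that assms(3) by simp
qed

lemma mono_increments_power_diff:
  fixes b e :: nat
  assumes "0 < b \<or> e = 0"
  shows "mono (\<lambda>k. int (b ^ (e - Suc k)) - int (b ^ (e - k)))"
proof (unfold mono_iff_le_Suc, intro allI)
  fix k
  show "int (b ^ (e - Suc k)) - int (b ^ (e - k))
      \<le> int (b ^ (e - Suc (Suc k))) - int (b ^ (e - Suc k))"
  proof (cases "Suc (Suc k) \<le> e")
    case True
    define a where "a = e - Suc (Suc k)"
    have "e - Suc (Suc k) = a" "e - Suc k = Suc a" "e - k = Suc (Suc a)"
      using True by (simp_all add: a_def)
    moreover have "0 \<le> int b ^ a * (int b - 1)\<^sup>2" by simp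
    ultimately show ?thesis by (simp add: power2_eq_square algebra_simps)
  next
    case False
    then have "e \<le> k \<or> e = Suc k" by linarith
    then show ?thesis using assms by auto
  qed
qed

lemma card_level_set_threshold_sums:
  fixes h :: "'a \<Rightarrow> nat"
  assumes "finite A"
  shows "int (card {i\<in>A. h i = t}) =
    (\<Sum>i\<in>A. int (h i + 1 - t)) - 2 * (\<Sum>i\<in>A. int (h i + 1 - Suc t))
      + (\<Sum>i\<in>A. int (h i + 1 - Suc (Suc t)))"
proof -
  have "int (card {i\<in>A. h i = t}) = (\<Sum>i\<in>A. of_bool (h i = t))"
    using assms by (simp add: Collect_conj_eq Int_commute)
  also have "\<dots> = (\<Sum>i\<in>A. int (h i + 1 - t) - 2 * int (h i + 1 - Suc t)
      + int (h i + 1 - Suc (Suc t)))"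
    by (intro sum.cong) auto
  finally show ?thesis by (simp add: sum.distrib sum_subtractf sum_distrib_left)
qed

lemma card_eq_sum_card_Int:
  assumes "finite I" and "\<And>i. i \<in> I \<Longrightarrow> finite (B i)"
    and "\<And>i j. i \<in> I \<Longrightarrow> j \<in> I \<Longrightarrow> i \<noteq> j \<Longrightarrow> B i \<inter> B j = {}"
    and "A \<subseteq> (\<Union>i\<in>I. B i)"
  shows "card A = (\<Sum>i\<in>I. card (A \<inter> B i))"
proof -
  have "A = (\<Union>i\<in>I. A \<inter> B i)" using assms(4) by blast
  then have "card A = card (\<Union>i\<in>I. A \<inter> B i)" by simp
  also have "\<dots> = (\<Sum>i\<in>I. card (A \<inter> B i))"
    using assms(1-3) by (intro card_UN_disjoint) auto
  finally show ?thesis .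
qed

lemma bij_betw_matching_levels:
  assumes "finite A" and "\<And>t. card {i\<in>A. f i = t} = card {i\<in>A. g i = t}"
  obtains \<sigma> where "bij_betw \<sigma> A A" and "\<And>i. i \<in> A \<Longrightarrow> f i = g (\<sigma> i)"
proof -
  have "\<exists>b. bij_betw b {i\<in>A. f i = t} {i\<in>A. g i = t}" for t
    using assms by (intro finite_same_card_bij) auto
  then obtain \<beta> where \<beta>: "\<And>t. bij_betw (\<beta> t) {i\<in>A. f i = t} {i\<in>A. g i = t}"
    by metis
  define \<sigma> where "\<sigma> i = \<beta> (f i) i" for i
  have level: "bij_betw \<sigma> {i\<in>A. f i = t} {i\<in>A. g i = t}" for t
    using \<beta>[of t] by (rule bij_betw_cong[THEN iffD1, rotated]) (simp add: \<sigma>_def)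
  have "bij_betw \<sigma> (\<Union>t. {i\<in>A. f i = t}) (\<Union>t. {i\<in>A. g i = t})"
    using level by (intro bij_betw_UNION_disjoint) (auto simp: disjoint_family_on_def)
  moreover have "(\<Union>t. {i\<in>A. f i = t}) = A" "(\<Union>t. {i\<in>A. g i = t}) = A" by auto
  moreover have "f i = g (\<sigma> i)" if "i \<in> A" for i
    using bij_betwE[OF level[of "f i"]] that by auto
  ultimately show ?thesis using that by simp
qed

lemma usw_fun_upd:
  assumes "j \<in> {1..n}"
  shows "usw n L (chi(j := X)) + card (chi j \<inter> L j) = usw n L chi + card (X \<inter> L j)"
proof -
  have remove: "usw n L c = card (c j \<inter> L j) + (\<Sum>i\<in>{1..n} - {j}. card (c i \<inter> L i))" for c
    unfolding usw_def by (rule sum.remove[OF finite_atLeastAtMost assms])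
  have "(\<Sum>i\<in>{1..n} - {j}. card ((chi(j := X)) i \<inter> L i)) = (\<Sum>i\<in>{1..n} - {j}. card (chi i \<inter> L i))"
    by (rule sum.cong) auto
  then show ?thesis using remove[of "chi(j := X)"] remove[of chi] by simp
qed

lemma usw_clean_eq_card_allocated:
  assumes "is_alloc n m chi" and "is_clean n L chi"
  shows "usw n L chi = card (\<Union>i\<in>{1..n}. chi i)"
proof -
  have "usw n L chi = (\<Sum>i\<in>{1..n}. card (chi i))"
    using assms(2) unfolding usw_def is_clean_def by (auto intro!: sum.cong simp: Int_absorb2)
  also have "\<dots> = card (\<Union>i\<in>{1..n}. chi i)"
    using assms(1) unfolding is_alloc_def by (intro card_UN_disjoint[symmetric]) (auto intro: finite_subset)
  finally show ?thesis .
qed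

lemma max_usw_allocates_liked_item:
  assumes max: "is_max_usw n m L chi" and j: "j \<in> {1..n}" and x: "x \<in> L j" "x \<in> {1..m}"
  shows "\<exists>i\<in>{1..n}. x \<in> chi i"
proof (rule ccontr)
  assume free: "\<not> (\<exists>i\<in>{1..n}. x \<in> chi i)"
  have alloc: "is_alloc n m chi" using max unfolding is_max_usw_def by blast
  have "is_alloc n m (chi(j := insert x (chi j)))"
    using alloc x free unfolding is_alloc_def by auto
  then have le: "usw n L (chi(j := insert x (chi j))) \<le> usw n L chi"
    using max unfolding is_max_usw_def by blast
  have "finite (chi j \<inter> L j)"
    using alloc j unfolding is_alloc_def by (meson finite_Int finite_atLeastAtMost finite_subset)
  moreover have "insert x (chi j) \<inter> L j = insert x (chi j \<inter> L j)" and "x \<notin> chi j"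
    using x free j by auto
  ultimately have "card (insert x (chi j) \<inter> L j) = card (chi j \<inter> L j) + 1" by simp
  then show False using usw_fun_upd[OF j, of L chi "insert x (chi j)"] le by linarith
qed

lemma valid_allocs_allocate_same_items:
  assumes v: "valid_alloc n m L chi" and v': "valid_alloc n m L chi'"
  shows "(\<Union>i\<in>{1..n}. chi' i) = (\<Union>i\<in>{1..n}. chi i)"
proof (rule card_subset_eq)
  have alloc: "is_alloc n m chi" "is_alloc n m chi'" and clean: "is_clean n L chi" "is_clean n L chi'"
    and max: "is_max_usw n m L chi" "is_max_usw n m L chi'"
    using v v' unfolding valid_alloc_def is_max_usw_def by auto
  show "finite (\<Union>i\<in>{1..n}. chi i)"
    using alloc(1) unfolding is_alloc_def by (auto intro: finite_subset)
  show "(\<Union>i\<in>{1..n}. chi' i) \<subseteq> (\<Union>i\<in>{1..n}. chi i)"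
  proof (safe)
    fix x j assume "j \<in> {1..n}" "x \<in> chi' j"
    moreover have "x \<in> L j" "x \<in> {1..m}"
      using calculation alloc(2) clean(2) unfolding is_alloc_def is_clean_def by blast+
    ultimately show "x \<in> (\<Union>i\<in>{1..n}. chi i)"
      using max_usw_allocates_liked_item[OF max(1)] by blast
  qed
  have "usw n L chi' = usw n L chi"
    using max alloc unfolding is_max_usw_def by (simp add: le_antisym)
  then show "card (\<Union>i\<in>{1..n}. chi' i) = card (\<Union>i\<in>{1..n}. chi i)"
    using alloc clean by (simp add: usw_clean_eq_card_allocated)
qed

lemma rtranclp_arc_imp_admits_transfer:
  assumes "(arc n L chi)\<^sup>*\<^sup>* k i" and "k \<noteq> i"
  shows "admits_transfer n L chi k i"
proof -
  obtain xs where "rtrancl_path (arc n L chi) k xs i"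
    using assms(1) rtranclp_eq_rtrancl_path by metis
  then obtain ys where path: "rtrancl_path (arc n L chi) k ys i" and dist: "distinct (k # ys)"
    using rtrancl_path_distinct by metis
  have "ys \<noteq> []" using path assms(2) by (cases rule: rtrancl_path.cases) auto
  then show ?thesis unfolding admits_transfer_def
    using dist rtrancl_path_nth[OF path] rtrancl_path_last[OF path]
    by (intro exI[of _ "k # ys"]) (auto simp: Suc_le_eq)
qed

lemma rtranclp_arc_source:
  assumes "(arc n L chi)\<^sup>*\<^sup>* k i" and "k \<noteq> i"
  shows "k \<in> {1..n}"
  using assms by (cases rule: converse_rtranclpE) (auto simp: arc_def)

lemma stable_reach_card_le:
  assumes "is_stable n L chi" and "(arc n L chi)\<^sup>*\<^sup>* k i" and "i \<in> {1..n}"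
  shows "card (chi k) \<le> card (chi i) + 1"
proof (cases "k = i")
  case False
  then show ?thesis
    using assms rtranclp_arc_imp_admits_transfer rtranclp_arc_source
    unfolding is_stable_def by fastforce
qed simp

lemma stable_alloc_level_function:
  assumes "is_stable n L chi"
  obtains r :: "nat \<Rightarrow> nat"
  where "\<And>i. card (chi i) \<le> r i"
    and "\<And>i. i \<in> {1..n} \<Longrightarrow> r i \<le> card (chi i) + 1"
    and "\<And>i j. arc n L chi i j \<Longrightarrow> r i \<le> r j"
proof
  define R where "R i = {k. (arc n L chi)\<^sup>*\<^sup>* k i}" for i
  define r where "r i = Max (card ` chi ` R i)" for i
  have fin: "finite (R i)" for i
  proof (rule finite_subset)
    show "R i \<subseteq> insert i {1..n}" unfolding R_def using rtranclp_arc_source by blast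
  qed simp
  have self: "i \<in> R i" for i by (simp add: R_def)
  show "card (chi i) \<le> r i" for i
    unfolding r_def using fin self by simp
  show "r i \<le> card (chi i) + 1" if "i \<in> {1..n}" for i
  proof -
    have "card (chi k) \<le> card (chi i) + 1" if "k \<in> R i" for k
      using stable_reach_card_le[OF assms _ \<open>i \<in> {1..n}\<close>] that by (simp add: R_def)
    then show ?thesis unfolding r_def using fin self by (subst Max_le_iff) auto
  qed
  show "r i \<le> r j" if "arc n L chi i j" for i j
  proof -
    have "R i \<subseteq> R j" unfolding R_def using that by (auto intro: rtranclp.rtrancl_into_rtrancl)
    then show ?thesis unfolding r_def using fin self by (intro Max_mono) auto
  qed
qed

lemma arc_monotone_weighted_card_le:
  fixes g :: "nat \<Rightarrow> int"
  assumes v: "valid_alloc n m L chi" and v': "valid_alloc n m L chi'"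
    and g_arc: "\<And>i j. arc n L chi i j \<Longrightarrow> g i \<le> g j"
  shows "(\<Sum>i\<in>{1..n}. g i * int (card (chi i))) \<le> (\<Sum>i\<in>{1..n}. g i * int (card (chi' i)))"
proof -
  have alloc: "is_alloc n m chi" "is_alloc n m chi'" and clean': "is_clean n L chi'"
    using v v' unfolding valid_alloc_def is_max_usw_def by auto
  have same: "(\<Union>i\<in>{1..n}. chi' i) = (\<Union>i\<in>{1..n}. chi i)"
    using v v' by (rule valid_allocs_allocate_same_items)
  have fin: "finite (chi i)" "finite (chi' i)" if "i \<in> {1..n}" for i
    using alloc that unfolding is_alloc_def by (meson finite_atLeastAtMost finite_subset)+
  have disj: "chi i \<inter> chi j = {}" "chi' i \<inter> chi' j = {}"
    if "i \<in> {1..n}" "j \<in> {1..n}" "i \<noteq> j" for i j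
    using alloc that unfolding is_alloc_def by auto
  have split': "card (chi' i) = (\<Sum>j\<in>{1..n}. card (chi' i \<inter> chi j))" if "i \<in> {1..n}" for i
  proof (rule card_eq_sum_card_Int)
    show "chi' i \<subseteq> (\<Union>j\<in>{1..n}. chi j)" using that same by blast
  qed (use fin disj in auto)
  have split: "card (chi j) = (\<Sum>i\<in>{1..n}. card (chi' i \<inter> chi j))" if "j \<in> {1..n}" for j
  proof -
    have "card (chi j) = (\<Sum>i\<in>{1..n}. card (chi j \<inter> chi' i))"
    proof (rule card_eq_sum_card_Int)
      show "chi j \<subseteq> (\<Union>i\<in>{1..n}. chi' i)" using that same by blast
    qed (use fin disj in auto)
    then show ?thesis by (simp add: Int_commute)
  qed
  have move: "g j * int (card (chi' i \<inter> chi j)) \<le> g i * int (card (chi' i \<inter> chi j))"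
    if "i \<in> {1..n}" "j \<in> {1..n}" for i j
  proof (cases "chi' i \<inter> chi j = {}")
    case False
    then obtain x where "x \<in> chi' i" "x \<in> chi j" by blast
    moreover have "chi' i \<subseteq> L i" using clean' that(1) unfolding is_clean_def by blast
    ultimately have "j = i \<or> arc n L chi j i" using that unfolding arc_def by blast
    then have "g j \<le> g i" using g_arc by blast
    then show ?thesis by (simp add: mult_right_mono)
  qed simp
  have "(\<Sum>j\<in>{1..n}. g j * int (card (chi j)))
      = (\<Sum>j\<in>{1..n}. \<Sum>i\<in>{1..n}. g j * int (card (chi' i \<inter> chi j)))"
    using split by (simp add: sum_distrib_left)
  also have "\<dots> = (\<Sum>i\<in>{1..n}. \<Sum>j\<in>{1..n}. g j * int (card (chi' i \<inter> chi j)))"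
    by (rule sum.swap)
  also have "\<dots> \<le> (\<Sum>i\<in>{1..n}. \<Sum>j\<in>{1..n}. g i * int (card (chi' i \<inter> chi j)))"
    using move by (intro sum_mono) auto
  also have "\<dots> = (\<Sum>i\<in>{1..n}. g i * int (card (chi' i)))"
    using split' by (simp add: sum_distrib_left)
  finally show ?thesis .
qed

lemma stable_alloc_minimises_convex_cost:
  fixes p :: "nat \<Rightarrow> int"
  assumes convex: "mono (\<lambda>k. p (Suc k) - p k)"
    and v: "valid_alloc n m L chi" and stable: "is_stable n L chi" and v': "valid_alloc n m L chi'"
  shows "(\<Sum>i\<in>{1..n}. p (card (chi i))) \<le> (\<Sum>i\<in>{1..n}. p (card (chi' i)))"
proof -
  obtain r where r_ge: "\<And>i. card (chi i) \<le> r i"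
    and r_le: "\<And>i. i \<in> {1..n} \<Longrightarrow> r i \<le> card (chi i) + 1"
    and r_arc: "\<And>i j. arc n L chi i j \<Longrightarrow> r i \<le> r j"
    using stable_alloc_level_function[OF stable] by blast
  \<comment> \<open>when \<open>r i = 0\<close>, truncated subtraction picks the segment \<open>[0, 1]\<close>\<close>
  define g where "g i = p (Suc (r i - 1)) - p (r i - 1)" for i
  have g_arc: "g i \<le> g j" if "arc n L chi i j" for i j
    using monoD[OF convex, of "r i - 1" "r j - 1"] r_arc[OF that] by (simp add: g_def)
  have exchange: "(\<Sum>i\<in>{1..n}. g i * int (card (chi i))) \<le> (\<Sum>i\<in>{1..n}. g i * int (card (chi' i)))"
    using v v' g_arc by (rule arc_monotone_weighted_card_le)
  have support: "p (card (chi i)) + g i * (int (card (chi' i)) - int (card (chi i))) \<le> p (card (chi' i))"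
    if "i \<in> {1..n}" for i
    unfolding g_def using r_ge[of i] r_le[OF that]
    by (intro convex_supporting_slope[OF convex]) auto
  have "(\<Sum>i\<in>{1..n}. p (card (chi i)))
      \<le> (\<Sum>i\<in>{1..n}. p (card (chi i)) + g i * (int (card (chi' i)) - int (card (chi i))))"
    using exchange by (simp add: sum.distrib sum_subtractf right_diff_distrib)
  also have "\<dots> \<le> (\<Sum>i\<in>{1..n}. p (card (chi' i)))"
    using support by (rule sum_mono)
  finally show ?thesis .
qed

lemma stable_allocs_convex_cost_eq:
  fixes p :: "nat \<Rightarrow> int"
  assumes "mono (\<lambda>k. p (Suc k) - p k)"
    and "valid_alloc n m L chi1" "is_stable n L chi1" "valid_alloc n m L chi2" "is_stable n L chi2"
  shows "(\<Sum>i\<in>{1..n}. p (card (chi1 i))) = (\<Sum>i\<in>{1..n}. p (card (chi2 i)))"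
  using stable_alloc_minimises_convex_cost[OF assms(1,2,3,4)]
    stable_alloc_minimises_convex_cost[OF assms(1,4,5,2)] by linarith

theorem lemma1:
  fixes n m :: nat and L :: "nat \<Rightarrow> nat set"
  assumes "\<forall>i\<in>{1..n}. L i \<subseteq> {1..m}"
  shows "(\<forall>chi. valid_alloc n m L chi \<and> is_stable n L chi \<longrightarrow> optimal_LexiMin n m L chi) \<and>
         (\<forall>chi1 chi2. valid_alloc n m L chi1 \<and> is_stable n L chi1 \<and>
                      valid_alloc n m L chi2 \<and> is_stable n L chi2 \<longrightarrow>
            (\<exists>\<sigma>. bij_betw \<sigma> {1..n} {1..n} \<and>
                 (\<forall>i\<in>{1..n}. profile chi1 i = profile chi2 (\<sigma> i))))"
proof (intro conjI allI impI)
  fix chi assume chi: "valid_alloc n m L chi \<and> is_stable n L chi"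
  have lexi: "mono (\<lambda>k. int (m ^ (m - Suc k)) - int (m ^ (m - k)))"
    by (rule mono_increments_power_diff) auto
  have "LexiMin n m (profile chi) \<le> LexiMin n m (profile chi')" if "valid_alloc n m L chi'" for chi'
  proof -
    have "(\<Sum>i\<in>{1..n}. int (m ^ (m - card (chi i)))) \<le> (\<Sum>i\<in>{1..n}. int (m ^ (m - card (chi' i))))"
      using stable_alloc_minimises_convex_cost[OF lexi] chi that by blast
    then show ?thesis
      unfolding LexiMin_def profile_def by (simp only: of_nat_sum[symmetric] of_nat_le_iff)
  qed
  then show "optimal_LexiMin n m L chi"
    using chi unfolding optimal_LexiMin_def by blast
next
  fix chi1 chi2
  assume stable: "valid_alloc n m L chi1 \<and> is_stable n L chi1 \<and> valid_alloc n m L chi2 \<and> is_stable n L chi2"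
  have threshold: "(\<Sum>i\<in>{1..n}. int (card (chi1 i) + 1 - s)) = (\<Sum>i\<in>{1..n}. int (card (chi2 i) + 1 - s))"
    for s
    using stable by (intro stable_allocs_convex_cost_eq) (auto simp: mono_iff_le_Suc)
  have "card {i\<in>{1..n}. profile chi1 i = t} = card {i\<in>{1..n}. profile chi2 i = t}" for t
    using card_level_set_threshold_sums[of "{1..n}" "profile chi1" t]
      card_level_set_threshold_sums[of "{1..n}" "profile chi2" t]
      threshold[of t] threshold[of "Suc t"] threshold[of "Suc (Suc t)"]
    unfolding profile_def by simp
  then obtain \<sigma> where "bij_betw \<sigma> {1..n} {1..n}" "\<And>i. i \<in> {1..n} \<Longrightarrow> profile chi1 i = profile chi2 (\<sigma> i)"
    using bij_betw_matching_levels[of "{1..n}" "profile chi1" "profile chi2"] by blast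
  then show "\<exists>\<sigma>. bij_betw \<sigma> {1..n} {1..n} \<and> (\<forall>i\<in>{1..n}. profile chi1 i = profile chi2 (\<sigma> i))"
    by blast
qed

end
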